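(* Let $\theta\in(0,1)$, $T>0$, and let $b\in L^\infty([0,\infty),C_b^\theta(\mathbb{R}^d,\mathbb{R}^d))$, $\sigma\in L^\infty([0,\infty),C_b^{1+\theta}(\mathbb{R}^d,\mathbb{R}^d\otimes\mathbb{R}^d))$ be such that $a=\sigma\sigma^*$ is everywhere invertible with $\|a^{-1}\|_0:=\sup_{t,x}\|a^{-1}(t,x)\|_{HS}<\infty$. Let $\lambda>0$ be such that the unique solution $\psi=\psi_\lambda\in L^\infty([0,\infty),C_b^{2+\theta}(\mathbb{R}^d,\mathbb{R}^d))$ of $$\partial_t\psi+\tfrac12\mathrm{Tr}[a(t,x)\nabla^2\psi]+\langle b(t,x),\nabla\psi\rangle-\lambda\psi=b\quad\text{on }[0,\infty)\times\mathbb{R}^d$$ satisfies $\sup_{t,x}\|\nabla\psi(t,x)\|_{HS}\le\frac12$, and suppose that for each $t$ the map $\Psi_t(x)=x+\psi(t,x)$ is a $C^2$-diffeomorphism of $\mathbb{R}^d$ with inverse $\Psi_t^{-1}$, where $\nabla\Psi_t$, $\nabla^2\Psi_t$ and $\nabla\Psi_t^{-1}$ are bounded uniformly in $t$ and $\nabla\Psi_t^{-1}(x)=\sum_{k\ge0}[-\nabla\psi(t,\Psi_t^{-1}(x))]^k$. Define $$\hat\sigma(t,x)=\nabla\Psi_t(\Psi_t^{-1}(x))\,\sigma(t,\Psi_t^{-1}(x)),\qquad \hat b(t,x)=\lambda\,\psi(t,\Psi_t^{-1}(x)).$$ Then there exist positive constants $K_1,\kappa_1,\delta_1$ such that for all $0\le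 t\le T$ and $x,y\in\mathbb{R}^d$: (1) $\|\hat\sigma(t,x)-\hat\sigma(t,y)\|_{HS}^2+2\langle\hat b(t,x)-\hat b(t,y),x-y\rangle\le K_1|x-y|^2$; (2) $\hat\sigma(t,x)\hat\sigma(t,x)^*\ge\kappa_1^2\,\mathrm{Id}$; (3) $|(\hat\sigma(t,x)-\hat\sigma(t,y))(x-y)|\le\delta_1|x-y|$.
   Context: $L^\infty([0,\infty),C_b^{n+\theta})$ consists of bounded Borel functions on $[0,\infty)\times\mathbb{R}^d$ whose spatial derivatives up to order $n$ are bounded and whose $n$-th spatial derivatives are $\theta$-Hölder continuous in $x$ uniformly in $t$ (norms taken as Euclidean or Hilbert–Schmidt for vector/matrix-valued functions). $\|\cdot\|_{HS}$ is the Hilbert–Schmidt norm, and $A\ge c\,\mathrm{Id}$ means $\langle Az,z\rangle\ge c|z|^2$ for all $z$. *)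

theory Defs
  imports "HOL-Analysis.Analysis"
begin

definition partial :: "(real^'n \<Rightarrow> 'b::real_normed_vector) \<Rightarrow> 'n \<Rightarrow> real^'n \<Rightarrow> 'b" where
  "partial f k x = frechet_derivative f (at x) (axis k 1)"

definition jac :: "(real^'n \<Rightarrow> real^'m) \<Rightarrow> real^'n \<Rightarrow> real^'n^'m" where
  "jac f x = (\<chi> i j. partial f j x $ i)"

primrec mpow :: "real^'n^'n \<Rightarrow> nat \<Rightarrow> real^'n^'n" where
  "mpow M 0 = mat 1"
| "mpow M (Suc k) = M ** mpow M k"

definition holder_bdd :: "real \<Rightarrow> (real \<Rightarrow> real^'n \<Rightarrow> 'b::real_normed_vector) \<Rightarrow> bool" where
  "holder_bdd \<theta> f \<longleftrightarrow> (\<exists>C. \<forall>t\<ge>0. \<forall>x y.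
      norm (f t x) \<le> C \<and> norm (f t x - f t y) \<le> C * norm (x - y) powr \<theta>)"

definition bdd_unif :: "(real \<Rightarrow> real^'n \<Rightarrow> 'b::real_normed_vector) \<Rightarrow> bool" where
  "bdd_unif f \<longleftrightarrow> (\<exists>C. \<forall>t\<ge>0. \<forall>x. norm (f t x) \<le> C)"

definition borel_tx :: "(real \<Rightarrow> real^'n \<Rightarrow> 'b::real_normed_vector) \<Rightarrow> bool" where
  "borel_tx f \<longleftrightarrow> (\<lambda>p. f (fst p) (snd p)) \<in> borel_measurable (restrict_space borel ({0..} \<times> UNIV))"

definition Linf_C0 :: "real \<Rightarrow> (real \<Rightarrow> real^'n \<Rightarrow> 'b::real_normed_vector) \<Rightarrow> bool" where
  "Linf_C0 \<theta> f \<longleftrightarrow> borel_tx f \<and> holder_bdd \<theta> f"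

definition Linf_C1 :: "real \<Rightarrow> (real \<Rightarrow> real^'n \<Rightarrow> 'b::real_normed_vector) \<Rightarrow> bool" where
  "Linf_C1 \<theta> f \<longleftrightarrow> borel_tx f \<and> bdd_unif f \<and>
     (\<forall>t\<ge>0. \<forall>x. f t differentiable (at x)) \<and>
     (\<forall>k. holder_bdd \<theta> (\<lambda>t. partial (f t) k))"

definition Linf_C2 :: "real \<Rightarrow> (real \<Rightarrow> real^'n \<Rightarrow> 'b::real_normed_vector) \<Rightarrow> bool" where
  "Linf_C2 \<theta> f \<longleftrightarrow> borel_tx f \<and> bdd_unif f \<and>
     (\<forall>t\<ge>0. \<forall>x. f t differentiable (at x)) \<and>
     (\<forall>t\<ge>0. \<forall>k x. partial (f t) k differentiable (at x)) \<and>
     (\<forall>k. bdd_unif (\<lambda>t. partial (f t) k)) \<and>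
     (\<forall>k j. holder_bdd \<theta> (\<lambda>t. partial (partial (f t) k) j))"

definition C2 :: "(real^'n \<Rightarrow> real^'n) \<Rightarrow> bool" where
  "C2 g \<longleftrightarrow> (\<forall>x. g differentiable (at x)) \<and>
     (\<forall>k x. partial g k differentiable (at x)) \<and>
     (\<forall>k j. continuous_on UNIV (partial (partial g k) j))"

definition gen_op :: "real^'n^'n \<Rightarrow> real^'n \<Rightarrow> (real^'n \<Rightarrow> real^'n) \<Rightarrow> real^'n \<Rightarrow> real^'n" where
  "gen_op A B u x = (\<chi> i. (1/2) * (\<Sum>j\<in>UNIV. \<Sum>k\<in>UNIV. A $ j $ k * partial (partial u k) j x $ i))
                     + jac u x *v B"

end

theory Submission
  imports Defs
begin

text \<open>Since \<open>\<bar>\<nabla>\<psi>\<bar> \<le> 1/2\<close>, the map \<open>\<Psi>\<^sub>t = id + \<psi>(t,\<cdot>)\<close> is a perturbation of the identity by a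
  \<open>1/2\<close>-contraction, so \<open>\<Psi>\<^sub>t\<^sup>-\<^sup>1\<close> is \<open>2\<close>-Lipschitz. Hence \<open>\<hat>\<sigma> = (\<nabla>\<Psi>\<^sub>t \<cdot> \<sigma>) \<circ> \<Psi>\<^sub>t\<^sup>-\<^sup>1\<close>
  is bounded and Lipschitz (a product of bounded Lipschitz matrix fields composed with a
  Lipschitz map) and \<open>\<hat>b\<close> is \<open>\<lambda>\<close>-Lipschitz; this gives (1) and (3). For (2), write
  \<open>\<hat>\<sigma>\<^sup>* z = \<sigma>\<^sup>* w\<close> with \<open>w = (I + \<nabla>\<psi>)\<^sup>* z\<close>, so \<open>\<bar>w\<bar> \<ge> \<bar>z\<bar>/2\<close>, and recover \<open>w\<close> from
  \<open>\<sigma>\<^sup>* w\<close> through \<open>(\<sigma>\<sigma>\<^sup>*)\<^sup>-\<^sup>1 \<sigma>\<close>, whose norm is uniformly bounded.\<close>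

lemma norm_vec_power2: "norm (A::'a::real_normed_vector^'n)^2 = (\<Sum>i\<in>UNIV. norm (A$i)^2)"
  unfolding norm_vec_def L2_set_def by (simp add: sum_nonneg)

lemma norm_matrix_power2: "norm (M::real^'n^'m)^2 = (\<Sum>i\<in>UNIV. \<Sum>j\<in>UNIV. (M$i$j)^2)"
  by (simp only: power2_norm_eq_inner) (simp add: inner_vec_def power2_eq_square)

lemma norm_transpose: "norm (transpose (M::real^'n^'m)) = norm M"
proof -
  have "norm (transpose M)^2 = norm M^2"
    unfolding norm_matrix_power2 transpose_def by (simp, rule sum.swap)
  then show ?thesis by (simp add: power2_eq_iff_nonneg)
qed

lemma norm_matrix_vector_mult_le: "norm ((A::real^'n^'m) *v x) \<le> norm A * norm x"
proof -
  have "((A *v x)$i)^2 \<le> (norm (A$i) * norm x)^2" for i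
  proof -
    have "(A *v x)$i = A$i \<bullet> x"
      by (simp add: matrix_vector_mult_def inner_vec_def)
    then have "\<bar>(A *v x)$i\<bar> \<le> norm (A$i) * norm x"
      by (simp add: Cauchy_Schwarz_ineq2)
    then show ?thesis by (metis abs_ge_zero power2_abs power_mono)
  qed
  then have "norm (A *v x)^2 \<le> (\<Sum>i\<in>UNIV. norm (A$i)^2 * norm x^2)"
    unfolding norm_vec_power2[of "A *v x"] by (intro sum_mono) (simp add: power_mult_distrib)
  also have "\<dots> = (norm A * norm x)^2"
    by (simp add: norm_vec_power2[of A] sum_distrib_right power_mult_distrib)
  finally show ?thesis by (rule power2_le_imp_le) simp
qed

lemma norm_matrix_mult_le: "norm ((A::real^'n^'m) ** (B::real^'k^'n)) \<le> norm A * norm B"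
proof -
  have "norm ((A ** B)$i) \<le> norm (A$i) * norm B" for i
  proof -
    have "(A ** B)$i = transpose B *v (A$i)"
      by (simp add: matrix_matrix_mult_def matrix_vector_mult_def transpose_def vec_eq_iff mult.commute)
    then show ?thesis
      using norm_matrix_vector_mult_le[of "transpose B" "A$i"] by (simp add: norm_transpose mult.commute)
  qed
  then have "norm (A ** B)^2 \<le> (\<Sum>i\<in>UNIV. norm (A$i)^2 * norm B^2)"
    unfolding norm_vec_power2[of "A ** B"]
    by (intro sum_mono) (metis norm_ge_zero power_mono power_mult_distrib)
  also have "\<dots> = (norm A * norm B)^2"
    by (simp add: norm_vec_power2[of A] sum_distrib_right power_mult_distrib)
  finally show ?thesis by (rule power2_le_imp_le) simp
qed

lemma matrix_inv_mult_left:
  assumes "invertible (A::real^'n^'m)"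
  shows "matrix_inv A ** A = mat 1"
proof -
  have "A ** matrix_inv A = mat 1 \<and> matrix_inv A ** A = mat 1"
    unfolding matrix_inv_def by (rule someI_ex) (use assms in \<open>simp add: invertible_def\<close>)
  then show ?thesis by simp
qed

lemma quadratic_form_mult_transpose:
  "((M ** transpose M) *v z) \<bullet> z = norm (transpose M *v (z::real^'m))^2"
  by (simp add: matrix_vector_mul_assoc[symmetric] power2_norm_eq_inner dot_lmul_matrix inner_commute)

lemma jac_eq_jacobian: "jac f x = jacobian f (at x)"
  unfolding jac_def partial_def jacobian_def matrix_def by simp

lemma has_derivative_jac:
  "(f::real^'n \<Rightarrow> real^'m) differentiable (at x) \<Longrightarrow> (f has_derivative (\<lambda>h. jac f x *v h)) (at x)"
  unfolding jac_eq_jacobian using jacobian_works by blast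

lemma jac_id_plus:
  fixes f :: "real^'n \<Rightarrow> real^'n"
  assumes "f differentiable (at x)"
  shows "jac (\<lambda>y. y + f y) x = mat 1 + jac f x"
proof -
  have "((\<lambda>y. y + f y) has_derivative (\<lambda>h. (mat 1 + jac f x) *v h)) (at x)"
    using has_derivative_add[OF has_derivative_ident has_derivative_jac[OF assms]]
    by (simp add: matrix_vector_mult_add_rdistrib)
  then show ?thesis
    unfolding jac_eq_jacobian jacobian_def by (simp add: frechet_derivative_at[symmetric])
qed

lemma lipschitz_on_jac_bound:
  fixes f :: "real^'n \<Rightarrow> real^'m"
  assumes "\<And>x. f differentiable (at x)" "\<And>x. norm (jac f x) \<le> B"
  shows "B-lipschitz_on UNIV f"
proof (rule bounded_derivative_imp_lipschitz)
  show "(f has_derivative (\<lambda>h. jac f x *v h)) (at x within UNIV)" for x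
    using has_derivative_jac assms(1) by auto
  show "onorm (\<lambda>h. jac f x *v h) \<le> B" for x
    by (rule onorm_le) (meson assms(2) mult_right_mono norm_ge_zero norm_matrix_vector_mult_le order_trans)
  show "0 \<le> B" by (meson assms(2) norm_ge_zero order_trans)
qed simp

lemma onorm_le_partial_bound:
  fixes f :: "real^'n \<Rightarrow> 'b::real_normed_vector" and C :: real
  assumes "f differentiable (at z)" "\<And>k. norm (partial f k z) \<le> C"
  shows "onorm (frechet_derivative f (at z)) \<le> C * CARD('n)"
proof (rule onorm_le)
  fix h :: "real^'n"
  let ?D = "frechet_derivative f (at z)"
  have lin: "linear ?D"
    using assms(1) frechet_derivative_works has_derivative_linear by blast
  have "?D h = ?D (\<Sum>i\<in>UNIV. (h$i) *s axis i 1)"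
    by (simp only: basis_expansion)
  also have "\<dots> = (\<Sum>i\<in>UNIV. (h$i) *\<^sub>R ?D (axis i 1))"
    by (simp only: linear_sum[OF lin] linear_scale[OF lin] scalar_mult_eq_scaleR)
  finally have "norm (?D h) \<le> (\<Sum>i\<in>UNIV. norm ((h$i) *\<^sub>R ?D (axis i 1)))"
    by (metis norm_sum)
  also have "\<dots> \<le> (\<Sum>i\<in>(UNIV::'n set). norm h * C)"
    using assms(2) unfolding partial_def norm_scaleR
    by (intro sum_mono mult_mono) (auto intro: component_le_norm_cart)
  finally show "norm (?D h) \<le> C * CARD('n) * norm h" by (simp add: mult_ac)
qed

lemma lipschitz_on_partial_bound:
  fixes f :: "real^'n \<Rightarrow> 'b::real_normed_vector" and C :: real
  assumes "\<And>x. f differentiable (at x)" "\<And>k x. norm (partial f k x) \<le> C"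
  shows "(C * CARD('n))-lipschitz_on UNIV f"
proof (rule bounded_derivative_imp_lipschitz)
  show "(f has_derivative frechet_derivative f (at x)) (at x within UNIV)" for x
    using assms(1) frechet_derivative_works by blast
  show "onorm (frechet_derivative f (at x)) \<le> C * CARD('n)" for x
    using onorm_le_partial_bound assms by blast
  show "0 \<le> C * CARD('n)" by (meson assms(2) norm_ge_zero order_trans zero_le_mult_iff of_nat_0_le_iff)
qed simp

lemma lipschitz_on_jac:
  fixes g :: "real^'n \<Rightarrow> real^'m" and C :: real
  assumes "\<And>k x. partial g k differentiable (at x)"
    and "\<And>k j x. norm (partial (partial g k) j x) \<le> C"
  shows "(CARD('n) * (C * CARD('n)))-lipschitz_on UNIV (jac g)"
proof (rule lipschitz_onI)
  have partial_lip: "(C * CARD('n))-lipschitz_on UNIV (partial g k)" for k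
    by (rule lipschitz_on_partial_bound) (use assms in auto)
  then show "0 \<le> CARD('n) * (C * CARD('n))"
    using lipschitz_on_nonneg by (metis of_nat_0_le_iff zero_le_mult_iff)
  fix u v :: "real^'n"
  have "transpose (jac g u - jac g v) = (\<chi> k. partial g k u - partial g k v)"
    by (simp add: transpose_def jac_def vec_eq_iff)
  then have "norm (jac g u - jac g v) = norm (\<chi> k. partial g k u - partial g k v)"
    by (metis norm_transpose)
  also have "\<dots> \<le> (\<Sum>k\<in>UNIV. norm (partial g k u - partial g k v))"
    by (simp add: norm_vec_def L2_set_le_sum)
  also have "\<dots> \<le> (\<Sum>k\<in>(UNIV::'n set). C * CARD('n) * norm (u - v))"
    using partial_lip by (intro sum_mono lipschitz_on_normD) auto
  finally show "dist (jac g u) (jac g v) \<le> CARD('n) * (C * CARD('n)) * dist u v"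
    by (simp add: dist_norm)
qed

lemma lipschitz_on_matrix_mult:
  fixes A :: "'a::metric_space \<Rightarrow> real^'n^'m" and B :: "'a \<Rightarrow> real^'k^'n"
  assumes "LA-lipschitz_on U A" "LB-lipschitz_on U B"
    and "\<And>x. x \<in> U \<Longrightarrow> norm (A x) \<le> CA" "\<And>x. x \<in> U \<Longrightarrow> norm (B x) \<le> CB"
    and "0 \<le> CA" "0 \<le> CB"
  shows "(LA * CB + CA * LB)-lipschitz_on U (\<lambda>x. A x ** B x)"
proof (rule lipschitz_onI)
  have LA: "0 \<le> LA" and LB: "0 \<le> LB" using assms(1,2) lipschitz_on_nonneg by blast+
  then show "0 \<le> LA * CB + CA * LB" using assms(5,6) by simp
  fix x y assume xy: "x \<in> U" "y \<in> U"
  have "A x ** B x - A y ** B y = (A x - A y) ** B x + A y ** (B x - B y)"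
    by (simp add: matrix_matrix_mult_def vec_eq_iff algebra_simps sum_subtractf sum.distrib)
  then have "norm (A x ** B x - A y ** B y) \<le> norm (A x - A y) * norm (B x) + norm (A y) * norm (B x - B y)"
    using norm_triangle_ineq[of "(A x - A y) ** B x" "A y ** (B x - B y)"]
      norm_matrix_mult_le[of "A x - A y" "B x"] norm_matrix_mult_le[of "A y" "B x - B y"] by simp
  also have "\<dots> \<le> (LA * dist x y) * CB + CA * (LB * dist x y)"
    using lipschitz_onD[OF assms(1) xy] lipschitz_onD[OF assms(2) xy] assms(3-6) xy LA LB
    by (intro add_mono mult_mono) (auto simp: dist_norm)
  finally show "dist (A x ** B x) (A y ** B y) \<le> (LA * CB + CA * LB) * dist x y"
    by (simp add: dist_norm algebra_simps)
qed

lemma lipschitz_on_matrix_mult_compose: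
  fixes A :: "'a::metric_space \<Rightarrow> real^'n^'m" and B :: "'a \<Rightarrow> real^'k^'n" and h :: "'b::metric_space \<Rightarrow> 'a"
  assumes "LA-lipschitz_on UNIV A" "LB-lipschitz_on UNIV B" "Lh-lipschitz_on UNIV h"
    and "\<And>u. norm (A u) \<le> CA" "\<And>u. norm (B u) \<le> CB"
  shows "((LA * CB + CA * LB) * Lh)-lipschitz_on UNIV (\<lambda>x. A (h x) ** B (h x))"
proof -
  have "0 \<le> CA" "0 \<le> CB"
    using assms(4,5) norm_ge_zero by (blast intro: order_trans)+
  then have "(LA * CB + CA * LB)-lipschitz_on UNIV (\<lambda>u. A u ** B u)"
    using assms by (intro lipschitz_on_matrix_mult) auto
  then show ?thesis
    by (rule lipschitz_on_compose2[OF assms(3) lipschitz_on_subset[OF _ subset_UNIV]])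
qed

lemma lipschitz_on_right_inverse_id_plus:
  fixes g h :: "'a::real_normed_vector \<Rightarrow> 'a"
  assumes g: "c-lipschitz_on UNIV g" and "c < 1" and inv: "\<And>y. h y + g (h y) = y"
  shows "(1 / (1 - c))-lipschitz_on UNIV h"
proof (rule lipschitz_onI)
  show "0 \<le> 1 / (1 - c)" using \<open>c < 1\<close> by simp
  fix x y :: 'a
  have "h x - h y = (x - y) - (g (h x) - g (h y))"
    using inv[of x] inv[of y] by (simp add: algebra_simps)
  then have "norm (h x - h y) \<le> norm (x - y) + norm (g (h x) - g (h y))"
    by (metis norm_triangle_ineq4)
  also have "\<dots> \<le> norm (x - y) + c * norm (h x - h y)"
    using lipschitz_on_normD[OF g] by simp
  finally have "norm (h x - h y) \<le> norm (x - y) + c * norm (h x - h y)" .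
  then show "dist (h x) (h y) \<le> 1 / (1 - c) * dist x y"
    using \<open>c < 1\<close> by (simp add: dist_norm field_simps)
qed

lemma norm_le_transpose_mult_id_plus:
  fixes P :: "real^'n^'n" and S :: "real^'m^'n"
  assumes "norm P \<le> c" "invertible (S ** transpose S)"
    and "norm (matrix_inv (S ** transpose S)) \<le> CA" "norm S \<le> CS"
  shows "(1 - c) * norm z \<le> CA * CS * norm (transpose ((mat 1 + P) ** S) *v z)"
proof -
  define w where "w = transpose (mat 1 + P) *v z"
  have "transpose (mat 1 + P) = mat 1 + transpose P"
    by (simp add: vec_eq_iff transpose_def mat_def)
  then have w_eq: "w = z + transpose P *v z"
    unfolding w_def by (simp add: matrix_vector_mult_add_rdistrib)
  have "norm (transpose P *v z) \<le> norm P * norm z"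
    using norm_matrix_vector_mult_le[of "transpose P" z] by (simp only: norm_transpose)
  also have "\<dots> \<le> c * norm z"
    using assms(1) by (rule mult_right_mono) simp
  finally have "norm (transpose P *v z) \<le> c * norm z" .
  moreover have "norm z \<le> norm w + norm (transpose P *v z)"
    using norm_triangle_ineq4[of w "transpose P *v z"] by (simp only: w_eq add_diff_cancel_right')
  ultimately have wz: "(1 - c) * norm z \<le> norm w" by (simp add: algebra_simps)
  have inv_w: "matrix_inv (S ** transpose S) *v (S *v (transpose S *v w)) = w"
    by (simp only: matrix_vector_mul_assoc matrix_inv_mult_left[OF assms(2)] matrix_vector_mul_lid)
  have "norm w \<le> norm (matrix_inv (S ** transpose S)) * norm (S *v (transpose S *v w))"
    using norm_matrix_vector_mult_le[of "matrix_inv (S ** transpose S)" "S *v (transpose S *v w)"]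
    unfolding inv_w .
  also have "\<dots> \<le> CA * (CS * norm (transpose S *v w))"
  proof (rule mult_mono)
    show "norm (S *v (transpose S *v w)) \<le> CS * norm (transpose S *v w)"
      using norm_matrix_vector_mult_le[of S "transpose S *v w"] assms(4)
      by (meson mult_right_mono norm_ge_zero order_trans)
  qed (use assms(3) norm_ge_zero order_trans in blast)+
  finally have "norm w \<le> CA * CS * norm (transpose S *v w)" by (simp only: mult.assoc)
  moreover have "transpose ((mat 1 + P) ** S) *v z = transpose S *v w"
    by (simp only: w_def matrix_transpose_mul matrix_vector_mul_assoc)
  ultimately show ?thesis using wz by simp
qed

lemma norm_le_transpose_jac_id_plus_mult:
  fixes f :: "real^'n \<Rightarrow> real^'n" and S :: "real^'m^'n"
  assumes "f differentiable (at u)" "norm (jac f u) \<le> c" "invertible (S ** transpose S)"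
    and "norm (matrix_inv (S ** transpose S)) \<le> CA" "norm S \<le> CS"
  shows "(1 - c) * norm z \<le> CA * CS * norm (transpose (jac (\<lambda>y. y + f y) u ** S) *v z)"
  unfolding jac_id_plus[OF assms(1)] using assms(2-) by (rule norm_le_transpose_mult_id_plus)

lemma Linf_C1_bounded_lipschitz:
  fixes \<sigma> :: "real \<Rightarrow> real^'n \<Rightarrow> 'b::real_normed_vector"
  assumes "Linf_C1 \<theta> \<sigma>"
  obtains C L where "\<And>t x. t \<ge> 0 \<Longrightarrow> norm (\<sigma> t x) \<le> C"
    and "\<And>t. t \<ge> 0 \<Longrightarrow> L-lipschitz_on UNIV (\<sigma> t)"
proof -
  have bdd: "bdd_unif \<sigma>" and diff: "\<And>t x. t \<ge> 0 \<Longrightarrow> \<sigma> t differentiable (at x)"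
    and holder: "\<And>k. holder_bdd \<theta> (\<lambda>t. partial (\<sigma> t) k)"
    using assms unfolding Linf_C1_def by auto
  obtain C where C: "\<And>t x. t \<ge> 0 \<Longrightarrow> norm (\<sigma> t x) \<le> C"
    using bdd unfolding bdd_unif_def by blast
  have "\<exists>Ck. \<forall>t\<ge>0. \<forall>x. norm (partial (\<sigma> t) k x) \<le> Ck" for k
  proof -
    obtain Ck where "\<forall>t\<ge>0. \<forall>x y. norm (partial (\<sigma> t) k x) \<le> Ck \<and>
        norm (partial (\<sigma> t) k x - partial (\<sigma> t) k y) \<le> Ck * norm (x - y) powr \<theta>"
      using holder[of k] unfolding holder_bdd_def by blast
    then show ?thesis by blast
  qed
  then obtain Cp where Cp: "\<And>k t x. t \<ge> 0 \<Longrightarrow> norm (partial (\<sigma> t) k x) \<le> Cp k"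
    by metis
  have partial_bdd: "norm (partial (\<sigma> t) k x) \<le> (\<Sum>k\<in>UNIV. \<bar>Cp k\<bar>)" if "t \<ge> 0" for t k x
    using Cp[OF that, of k x] member_le_sum[of k UNIV "\<lambda>k. \<bar>Cp k\<bar>"] by simp
  have "((\<Sum>k\<in>UNIV. \<bar>Cp k\<bar>) * CARD('n))-lipschitz_on UNIV (\<sigma> t)" if "t \<ge> 0" for t
    by (rule lipschitz_on_partial_bound) (use diff partial_bdd that in auto)
  with C that show thesis by blast
qed

lemma monotone_nondegenerate_of_lipschitz:
  fixes \<sigma> :: "'a \<Rightarrow> real^'n \<Rightarrow> real^'n^'m" and b :: "'a \<Rightarrow> real^'n \<Rightarrow> real^'n"
  assumes \<sigma>_lip: "\<And>t. t \<in> I \<Longrightarrow> L-lipschitz_on UNIV (\<sigma> t)"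
    and \<sigma>_bdd: "\<And>t x. t \<in> I \<Longrightarrow> norm (\<sigma> t x) \<le> C"
    and b_lip: "\<And>t. t \<in> I \<Longrightarrow> M-lipschitz_on UNIV (b t)"
    and nondeg: "\<And>t x z. t \<in> I \<Longrightarrow> norm z \<le> K * norm (transpose (\<sigma> t x) *v z)"
  shows "\<exists>K1 \<kappa>1 \<delta>1. K1 > 0 \<and> \<kappa>1 > 0 \<and> \<delta>1 > 0 \<and> (\<forall>t\<in>I. \<forall>x y.
        norm (\<sigma> t x - \<sigma> t y)^2 + 2 * ((b t x - b t y) \<bullet> (x - y)) \<le> K1 * norm (x - y)^2
      \<and> (\<forall>z. ((\<sigma> t x ** transpose (\<sigma> t x)) *v z) \<bullet> z \<ge> \<kappa>1^2 * norm z ^ 2)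
      \<and> norm ((\<sigma> t x - \<sigma> t y) *v (x - y)) \<le> \<delta>1 * norm (x - y))"
proof -
  define K1 where "K1 = L^2 + 2 * \<bar>M\<bar> + 1"
  define \<kappa>1 where "\<kappa>1 = 1 / (\<bar>K\<bar> + 1)"
  define \<delta>1 where "\<delta>1 = 2 * \<bar>C\<bar> + 1"
  have monotone: "norm (\<sigma> t x - \<sigma> t y)^2 + 2 * ((b t x - b t y) \<bullet> (x - y)) \<le> K1 * norm (x - y)^2"
    if t: "t \<in> I" for t x y
  proof -
    have "norm (\<sigma> t x - \<sigma> t y)^2 \<le> (L * norm (x - y))^2"
      using lipschitz_on_normD[OF \<sigma>_lip[OF t], of x y] by (intro power_mono) auto
    then have \<sigma>_part: "norm (\<sigma> t x - \<sigma> t y)^2 \<le> L^2 * norm (x - y)^2"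
      by (simp only: power_mult_distrib)
    have "(b t x - b t y) \<bullet> (x - y) \<le> norm (b t x - b t y) * norm (x - y)"
      by (rule norm_cauchy_schwarz)
    also have "\<dots> \<le> (\<bar>M\<bar> * norm (x - y)) * norm (x - y)"
      using lipschitz_on_normD[OF b_lip[OF t], of x y] lipschitz_on_nonneg[OF b_lip[OF t]]
      by (intro mult_right_mono) auto
    finally have b_part: "(b t x - b t y) \<bullet> (x - y) \<le> \<bar>M\<bar> * norm (x - y)^2"
      by (simp only: power2_eq_square mult.assoc)
    have "K1 * norm (x - y)^2 = L^2 * norm (x - y)^2 + 2 * (\<bar>M\<bar> * norm (x - y)^2) + norm (x - y)^2"
      by (simp add: K1_def algebra_simps)
    with \<sigma>_part b_part zero_le_power2[of "norm (x - y)"] show ?thesis by linarith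
  qed
  have nondegenerate: "\<kappa>1^2 * norm z ^ 2 \<le> ((\<sigma> t x ** transpose (\<sigma> t x)) *v z) \<bullet> z"
    if t: "t \<in> I" for t x z
  proof -
    have "K * norm (transpose (\<sigma> t x) *v z) \<le> (\<bar>K\<bar> + 1) * norm (transpose (\<sigma> t x) *v z)"
      by (rule mult_right_mono) simp_all
    with nondeg[OF t, of z x] have "norm z \<le> (\<bar>K\<bar> + 1) * norm (transpose (\<sigma> t x) *v z)"
      by linarith
    then have "(\<kappa>1 * norm z)^2 \<le> norm (transpose (\<sigma> t x) *v z)^2"
      by (intro power_mono) (simp_all add: \<kappa>1_def field_simps)
    then show ?thesis
      by (simp add: quadratic_form_mult_transpose power_mult_distrib)
  qed
  have bounded: "norm ((\<sigma> t x - \<sigma> t y) *v (x - y)) \<le> \<delta>1 * norm (x - y)"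
    if t: "t \<in> I" for t x y
  proof -
    have "norm ((\<sigma> t x - \<sigma> t y) *v (x - y)) \<le> (norm (\<sigma> t x) + norm (\<sigma> t y)) * norm (x - y)"
      using norm_matrix_vector_mult_le[of "\<sigma> t x - \<sigma> t y" "x - y"] norm_triangle_ineq4
      by (metis mult_right_mono norm_ge_zero order_trans)
    also have "\<dots> \<le> \<delta>1 * norm (x - y)"
      using \<sigma>_bdd[OF t, of x] \<sigma>_bdd[OF t, of y] by (intro mult_right_mono) (auto simp: \<delta>1_def)
    finally show ?thesis .
  qed
  have "K1 > 0" "\<kappa>1 > 0" "\<delta>1 > 0"
    unfolding K1_def \<kappa>1_def \<delta>1_def by (simp_all add: add_nonneg_pos)
  with monotone nondegenerate bounded show ?thesis by blast
qed

theorem lemma3p4: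
  fixes \<theta> T lam :: real
    and b :: "real \<Rightarrow> real^'d \<Rightarrow> real^'d"
    and \<sigma> :: "real \<Rightarrow> real^'d \<Rightarrow> real^'d^'d"
    and \<psi> :: "real \<Rightarrow> real^'d \<Rightarrow> real^'d"
    and \<Psi>inv :: "real \<Rightarrow> real^'d \<Rightarrow> real^'d"
  assumes theta: "0 < \<theta>" "\<theta> < 1"
    and T: "T > 0"
    and b_reg: "Linf_C0 \<theta> b"
    and sigma_reg: "Linf_C1 \<theta> \<sigma>"
    and a_inv: "\<forall>t\<ge>0. \<forall>x. invertible (\<sigma> t x ** transpose (\<sigma> t x))"
    and a_inv_bdd: "\<exists>C. \<forall>t\<ge>0. \<forall>x. norm (matrix_inv (\<sigma> t x ** transpose (\<sigma> t x))) \<le> C"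
    and lam: "lam > 0"
    and psi_reg: "Linf_C2 \<theta> \<psi>"
    and psi_pde: "\<forall>x. \<forall>s t. 0 \<le> s \<longrightarrow> s \<le> t \<longrightarrow>
        ((\<lambda>r. b r x + lam *\<^sub>R \<psi> r x
               - gen_op (\<sigma> r x ** transpose (\<sigma> r x)) (b r x) (\<psi> r) x)
          has_integral (\<psi> t x - \<psi> s x)) {s..t}"
    and psi_grad: "\<forall>t\<ge>0. \<forall>x. norm (jac (\<psi> t) x) \<le> 1/2"
    and inv1: "\<forall>t\<ge>0. \<forall>x. \<Psi>inv t (x + \<psi> t x) = x"
    and inv2: "\<forall>t\<ge>0. \<forall>y. \<Psi>inv t y + \<psi> t (\<Psi>inv t y) = y"
    and Psi_C2: "\<forall>t\<ge>0. C2 (\<lambda>x. x + \<psi> t x)"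
    and Psiinv_C2: "\<forall>t\<ge>0. C2 (\<Psi>inv t)"
    and Psi_grad_bdd: "\<exists>C. \<forall>t\<ge>0. \<forall>x. norm (jac (\<lambda>y. y + \<psi> t y) x) \<le> C"
    and Psi_hess_bdd: "\<exists>C. \<forall>t\<ge>0. \<forall>x k j.
        norm (partial (partial (\<lambda>y. y + \<psi> t y) k) j x) \<le> C"
    and Psiinv_grad_bdd: "\<exists>C. \<forall>t\<ge>0. \<forall>x. norm (jac (\<Psi>inv t) x) \<le> C"
    and Psiinv_series: "\<forall>t\<ge>0. \<forall>x.
        (\<lambda>k. mpow (- jac (\<psi> t) (\<Psi>inv t x)) k) sums (jac (\<Psi>inv t) x)"
  shows "\<exists>K1 \<kappa>1 \<delta>1. K1 > 0 \<and> \<kappa>1 > 0 \<and> \<delta>1 > 0 \<and>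
    (let \<sigma>h = (\<lambda>t x. jac (\<lambda>y. y + \<psi> t y) (\<Psi>inv t x) ** \<sigma> t (\<Psi>inv t x));
         bh = (\<lambda>t x. lam *\<^sub>R \<psi> t (\<Psi>inv t x))
     in \<forall>t\<in>{0..T}. \<forall>x y.
        norm (\<sigma>h t x - \<sigma>h t y)^2 + 2 * ((bh t x - bh t y) \<bullet> (x - y)) \<le> K1 * norm (x - y)^2
      \<and> (\<forall>z. ((\<sigma>h t x ** transpose (\<sigma>h t x)) *v z) \<bullet> z \<ge> \<kappa>1^2 * norm z ^ 2)
      \<and> norm ((\<sigma>h t x - \<sigma>h t y) *v (x - y)) \<le> \<delta>1 * norm (x - y))"
proof -
  let ?\<Psi> = "\<lambda>t y. y + \<psi> t y"
  obtain C\<sigma> L\<sigma> where \<sigma>_bdd: "\<And>t x. t \<ge> 0 \<Longrightarrow> norm (\<sigma> t x) \<le> C\<sigma>"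
    and \<sigma>_lip: "\<And>t. t \<ge> 0 \<Longrightarrow> L\<sigma>-lipschitz_on UNIV (\<sigma> t)"
    using Linf_C1_bounded_lipschitz[OF sigma_reg] by blast
  obtain CJ CH CA where J_bdd: "\<And>t x. t \<ge> 0 \<Longrightarrow> norm (jac (?\<Psi> t) x) \<le> CJ"
    and H_bdd: "\<And>t x k j. t \<ge> 0 \<Longrightarrow> norm (partial (partial (?\<Psi> t) k) j x) \<le> CH"
    and A_bdd: "\<And>t x. t \<ge> 0 \<Longrightarrow> norm (matrix_inv (\<sigma> t x ** transpose (\<sigma> t x))) \<le> CA"
    using Psi_grad_bdd Psi_hess_bdd a_inv_bdd by metis
  have \<psi>_diff: "\<And>t x. t \<ge> 0 \<Longrightarrow> \<psi> t differentiable (at x)"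
    using psi_reg unfolding Linf_C2_def by blast
  have \<psi>_lip: "(1/2)-lipschitz_on UNIV (\<psi> t)" if "t \<ge> 0" for t
    using lipschitz_on_jac_bound \<psi>_diff psi_grad that by blast
  have \<Psi>inv_lip: "2-lipschitz_on UNIV (\<Psi>inv t)" if "t \<ge> 0" for t
    using lipschitz_on_right_inverse_id_plus[OF \<psi>_lip[OF that]] inv2 that by auto
  have J_lip: "(CARD('d) * (CH * CARD('d)))-lipschitz_on UNIV (jac (?\<Psi> t))" if "t \<ge> 0" for t
    using Psi_C2 H_bdd that unfolding C2_def by (blast intro: lipschitz_on_jac)
  define \<sigma>h where "\<sigma>h = (\<lambda>t x. jac (?\<Psi> t) (\<Psi>inv t x) ** \<sigma> t (\<Psi>inv t x))"
  have "((CARD('d) * (CH * CARD('d)) * C\<sigma> + CJ * L\<sigma>) * 2)-lipschitz_on UNIV (\<sigma>h t)" if "t \<ge> 0" for t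
    unfolding \<sigma>h_def using J_bdd \<sigma>_bdd that
    by (intro lipschitz_on_matrix_mult_compose J_lip \<sigma>_lip \<Psi>inv_lip)
  moreover have "norm (\<sigma>h t x) \<le> CJ * C\<sigma>" if "t \<ge> 0" for t x
    unfolding \<sigma>h_def using J_bdd[OF that] \<sigma>_bdd[OF that]
    by (meson mult_mono norm_ge_zero norm_matrix_mult_le order_trans)
  moreover have "(lam * ((1/2) * 2))-lipschitz_on UNIV (\<lambda>x. lam *\<^sub>R \<psi> t (\<Psi>inv t x))" if "t \<ge> 0" for t
    using lam by (intro lipschitz_on_cmult_nonneg lipschitz_on_compose2[OF \<Psi>inv_lip[OF that]]
        lipschitz_on_subset[OF \<psi>_lip[OF that] subset_UNIV]) simp
  moreover have "norm z \<le> 2 * (CA * C\<sigma>) * norm (transpose (\<sigma>h t x) *v z)" if "t \<ge> 0" for t x z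
    using norm_le_transpose_jac_id_plus_mult[of "\<psi> t" "\<Psi>inv t x" "1/2" "\<sigma> t (\<Psi>inv t x)" CA C\<sigma> z]
      \<psi>_diff psi_grad a_inv A_bdd \<sigma>_bdd that unfolding \<sigma>h_def by simp
  ultimately show ?thesis
    unfolding Let_def \<sigma>h_def[symmetric]
    by (intro monotone_nondegenerate_of_lipschitz[where I = "{0..T}"]) auto
qed

end
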